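(* Let $\mathcal{M}=(S,E,T)$ be a trivially parametric Markov chain in which every non-target state has at least two successors. Then there is a trivially parametric Markov chain $\mathcal{N}=(S',E',T)$ with $S\subseteq S'$ and $|sE'|=2$ for all $s\in S'\setminus T$, such that for every graph-preserving valuation $\mathsf{val}$ of $\mathcal{M}$ there is a graph-preserving valuation $\mathsf{val}'$ of $\mathcal{N}$ with $\mathbb{P}^s_{\mathcal{M}^{\mathsf{val}}}[\Diamond\mathit{fin}]=\mathbb{P}^s_{\mathcal{N}^{\mathsf{val}'}}[\Diamond\mathit{fin}]$ for all $s\in S$, and conversely for every graph-preserving valuation $\mathsf{val}'$ of $\mathcal{N}$ there is a graph-preserving valuation $\mathsf{val}$ of $\mathcal{M}$ with the same equalities.
   Context: A trivially parametric Markov chain $\mathcal{M}=(S,E,T)$ consists of a finite set of states $S$, targets $T=\{\mathit{fin},\mathit{fail}\}$ with no outgoing edges, and edges $E\subseteq (S\setminus T)\times S$; $sE$ is the successor set of $s$. A graph-preserving valuation assigns to each non-target $s$ a probability distribution with full support on $sE$; the resulting Markov chain is $\mathcal{M}^{\mathsf{val}}$, and $\mathbb{P}^s_{\mathcal{M}^{\mathsf{val}}}[\Diamond\mathit{fin}]$ is the probability of reaching $\mathit{fin}$ from $s$ in it. *)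

theory Defs
  imports Complex_Main
begin

text \<open>A trivially parametric Markov chain (S, E, T) with targets T = {fin, fail}.\<close>
definition tpmc :: "'a set \<Rightarrow> ('a \<times> 'a) set \<Rightarrow> 'a \<Rightarrow> 'a \<Rightarrow> bool" where
  "tpmc S E fin fail \<longleftrightarrow> finite S \<and> fin \<in> S \<and> fail \<in> S \<and> fin \<noteq> fail \<and>
     E \<subseteq> (S - {fin, fail}) \<times> S"

definition succ :: "('a \<times> 'a) set \<Rightarrow> 'a \<Rightarrow> 'a set" where
  "succ E s = {t. (s, t) \<in> E}"

definition gp_val :: "'a set \<Rightarrow> ('a \<times> 'a) set \<Rightarrow> 'a \<Rightarrow> 'a \<Rightarrow> ('a \<Rightarrow> 'a \<Rightarrow> real) \<Rightarrow> bool" where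
  "gp_val S E fin fail val \<longleftrightarrow>
     (\<forall>s \<in> S - {fin, fail}.
        (\<forall>t. (s, t) \<in> E \<longrightarrow> val s t > 0) \<and>
        (\<forall>t. (s, t) \<notin> E \<longrightarrow> val s t = 0) \<and>
        (\<Sum>t \<in> succ E s. val s t) = 1)"

fun reach_bounded :: "('a \<times> 'a) set \<Rightarrow> 'a \<Rightarrow> 'a \<Rightarrow> ('a \<Rightarrow> 'a \<Rightarrow> real) \<Rightarrow> nat \<Rightarrow> 'a \<Rightarrow> real" where
  "reach_bounded E fin fail val 0 s = (if s = fin then 1 else 0)"
| "reach_bounded E fin fail val (Suc n) s =
     (if s = fin then 1 else if s = fail then 0
      else (\<Sum>t \<in> succ E s. val s t * reach_bounded E fin fail val n t))"

text \<open>Reachability probability P^s[<>fin] = sup over n of the n-step-bounded probability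
  (the measure of the increasing union of the events "fin reached within n steps").\<close>
definition reach_prob :: "('a \<times> 'a) set \<Rightarrow> 'a \<Rightarrow> 'a \<Rightarrow> ('a \<Rightarrow> 'a \<Rightarrow> real) \<Rightarrow> 'a \<Rightarrow> real" where
  "reach_prob E fin fail val s = (SUP n. reach_bounded E fin fail val n s)"

end

theory Submission
  imports Defs "HOL-Library.Countable_Set" "HOL-Library.Nat_Bijection"
begin

(* Each non-target state s is replaced by a complete binary tree of uniform depth D = |S| rooted
   at s, whose 2^D leaves are labelled cyclically by the successors of s: since |sE| \<ge> 2,
   sibling leaves carry distinct labels, and since |sE| \<le> D < 2^D, every successor occurs.
   One step of M is thus exactly D steps of N, so n-step reachability in M is nD-step
   reachability in N, and the suprema agree.
   A valuation of N is projected to M by summing path products over the leaves labelled t;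
   a valuation v of M is lifted by sharing v s t evenly among the leaves labelled t and
   weighting each tree edge by the ratio of the masses of the subtrees below its endpoints. *)

lemma tpmc_succ_subset: "tpmc S E fin fail \<Longrightarrow> succ E s \<subseteq> S"
  unfolding tpmc_def succ_def by auto

lemma tpmc_finite_succ: "tpmc S E fin fail \<Longrightarrow> finite (succ E s)"
  using tpmc_succ_subset by (metis finite_subset tpmc_def)

lemma tpmc_succ_empty: "tpmc S E fin fail \<Longrightarrow> s \<notin> S - {fin, fail} \<Longrightarrow> succ E s = {}"
  unfolding tpmc_def succ_def by auto

lemma gp_val_pos:
  "gp_val S E fin fail v \<Longrightarrow> s \<in> S - {fin, fail} \<Longrightarrow> t \<in> succ E s \<Longrightarrow> 0 < v s t"
  unfolding gp_val_def succ_def by blast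

lemma gp_val_sum:
  "gp_val S E fin fail v \<Longrightarrow> s \<in> S - {fin, fail} \<Longrightarrow> (\<Sum>t\<in>succ E s. v s t) = 1"
  unfolding gp_val_def by blast

lemma sum_lessThan_double:
  fixes f :: "nat \<Rightarrow> 'b::comm_monoid_add"
  shows "(\<Sum>q<2 * n. f q) = (\<Sum>p<n. f (2 * p) + f (2 * p + 1))"
  by (induction n) (simp_all add: sum.distrib ac_simps)

lemma cSUP_incseq_mult_index:
  fixes f :: "nat \<Rightarrow> 'b::conditionally_complete_lattice"
  assumes "incseq f" "bdd_above (range f)" "0 < D"
  shows "(SUP n. f (n * D)) = (SUP n. f n)"
proof (rule antisym)
  show "(SUP n. f (n * D)) \<le> (SUP n. f n)"
    by (rule cSUP_least) (auto intro: cSUP_upper[OF _ assms(2)])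
  have "bdd_above (range (\<lambda>n. f (n * D)))"
    using assms(2) by (rule bdd_above_mono) auto
  moreover have "f n \<le> f (n * D)" for n
    using assms(1,3) by (simp add: incseq_def)
  ultimately show "(SUP n. f n) \<le> (SUP n. f (n * D))"
    by (meson UNIV_I UNIV_not_empty cSUP_least cSUP_upper order_trans)
qed

context
  fixes S :: "'a set" and E :: "('a \<times> 'a) set" and fin fail :: 'a and v :: "'a \<Rightarrow> 'a \<Rightarrow> real"
  assumes tpmc: "tpmc S E fin fail" and val: "gp_val S E fin fail v"
begin

lemma reach_bounded_bounds:
  "0 \<le> reach_bounded E fin fail v n s \<and> reach_bounded E fin fail v n s \<le> 1"
proof (induction n arbitrary: s)
  case (Suc n)
  show ?case
  proof (cases "s \<in> S - {fin, fail}")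
    case True
    have pos: "\<forall>t\<in>succ E s. 0 \<le> v s t"
      using gp_val_pos[OF val True] by (simp add: less_imp_le)
    have "0 \<le> (\<Sum>t\<in>succ E s. v s t * reach_bounded E fin fail v n t)"
      using Suc pos by (intro sum_nonneg) simp
    moreover have "(\<Sum>t\<in>succ E s. v s t * reach_bounded E fin fail v n t) \<le> (\<Sum>t\<in>succ E s. v s t)"
      using Suc pos by (intro sum_mono) (simp add: mult_left_le)
    ultimately show ?thesis
      using True gp_val_sum[OF val True] by simp
  qed (use tpmc_succ_empty[OF tpmc] in auto)
qed simp

lemma incseq_reach_bounded: "incseq (\<lambda>n. reach_bounded E fin fail v n s)"
proof -
  have "reach_bounded E fin fail v n s \<le> reach_bounded E fin fail v (Suc n) s" for n
  proof (induction n arbitrary: s)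
    case 0
    show ?case
      by (cases "s = fin") (use reach_bounded_bounds[of "Suc 0" s] in auto)
  next
    case (Suc n)
    show ?case
    proof (cases "s \<in> S - {fin, fail}")
      case True
      have "(\<Sum>t\<in>succ E s. v s t * reach_bounded E fin fail v n t)
          \<le> (\<Sum>t\<in>succ E s. v s t * reach_bounded E fin fail v (Suc n) t)"
        using Suc gp_val_pos[OF val True] by (intro sum_mono mult_left_mono) (simp_all add: less_imp_le)
      then show ?thesis
        using True by simp
    qed (use tpmc_succ_empty[OF tpmc] in auto)
  qed
  then show ?thesis by (rule incseq_SucI)
qed

end

lemma reach_prob_eq_if_step_simulation:
  fixes E' :: "(('a + 'b) \<times> ('a + 'b)) set"
  assumes M: "tpmc S E fin fail" and N: "tpmc S' E' (Inl fin) (Inl fail)"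
    and w: "gp_val S' E' (Inl fin) (Inl fail) w" and "0 < D"
    and step: "\<And>s m. s \<in> S - {fin, fail} \<Longrightarrow>
      reach_bounded E' (Inl fin) (Inl fail) w (m + D) (Inl s) =
      (\<Sum>t\<in>succ E s. v s t * reach_bounded E' (Inl fin) (Inl fail) w m (Inl t))"
    and "s \<in> S"
  shows "reach_prob E fin fail v s = reach_prob E' (Inl fin) (Inl fail) w (Inl s)"
proof -
  let ?rb' = "reach_bounded E' (Inl fin) (Inl fail) w"
  obtain D' where D': "D = Suc D'"
    using \<open>0 < D\<close> gr0_conv_Suc by blast
  have "fin \<noteq> fail"
    using M unfolding tpmc_def by blast
  have sampled: "?rb' (n * D) (Inl s) = reach_bounded E fin fail v n s" if "s \<in> S" for n s
    using that
  proof (induction n arbitrary: s)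
    case (Suc n)
    show ?case
    proof (cases "s \<in> {fin, fail}")
      case True
      then show ?thesis
        using \<open>fin \<noteq> fail\<close> by (auto simp: D')
    next
      case False
      then have s: "s \<in> S - {fin, fail}"
        using Suc.prems by blast
      have "?rb' (Suc n * D) (Inl s) = (\<Sum>t\<in>succ E s. v s t * ?rb' (n * D) (Inl t))"
        using step[OF s, of "n * D"] by (simp add: add.commute)
      also have "\<dots> = (\<Sum>t\<in>succ E s. v s t * reach_bounded E fin fail v n t)"
        using Suc.IH tpmc_succ_subset[OF M] by (intro sum.cong) auto
      finally show ?thesis
        using False by simp
    qed
  qed simp
  have "bdd_above (range (\<lambda>n. ?rb' n (Inl s)))"
    using reach_bounded_bounds[OF N w] by (intro bdd_aboveI) blast
  then have "reach_prob E' (Inl fin) (Inl fail) w (Inl s) = (SUP n. ?rb' (n * D) (Inl s))"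
    unfolding reach_prob_def
    using cSUP_incseq_mult_index[OF incseq_reach_bounded[OF N w] _ \<open>0 < D\<close>] by simp
  then show ?thesis
    unfolding reach_prob_def using sampled \<open>s \<in> S\<close> by simp
qed

locale binarization =
  fixes S :: "'a set" and E :: "('a \<times> 'a) set" and fin fail :: 'a
  assumes tpmc: "tpmc S E fin fail"
    and branching: "\<forall>s \<in> S - {fin, fail}. 2 \<le> card (succ E s)"
begin

definition depth :: nat where
  "depth = card S"

definition enum_succ :: "'a \<Rightarrow> nat \<Rightarrow> 'a" where
  "enum_succ s = (SOME h. bij_betw h {0..<card (succ E s)} (succ E s))"

definition leaf_label :: "'a \<Rightarrow> nat \<Rightarrow> 'a" where
  "leaf_label s q = enum_succ s (q mod card (succ E s))"

(* Position p < 2^d on level d of the tree replacing s: the root is s itself, inner levels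
   are fresh states, and each leaf is the successor labelling it. *)
definition node :: "'a \<Rightarrow> nat \<Rightarrow> nat \<Rightarrow> 'a + nat" where
  "node s d p =
    (if d = 0 then Inl s
     else if d < depth then Inr (prod_encode (to_nat_on S s, prod_encode (d, p)))
     else Inl (leaf_label s p))"

definition inner_nodes :: "('a \<times> nat \<times> nat) set" where
  "inner_nodes = {(s, d, p). s \<in> S - {fin, fail} \<and> d < depth \<and> p < 2 ^ d}"

definition bin_edges :: "(('a + nat) \<times> ('a + nat)) set" where
  "bin_edges = {(node s d p, node s (Suc d) q) | s d p q.
     (s, d, p) \<in> inner_nodes \<and> (q = 2 * p \<or> q = 2 * p + 1)}"

definition bin_states :: "('a + nat) set" where
  "bin_states = Inl ` S \<union> (\<lambda>(s, d, p). node s d p) ` inner_nodes"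

lemma finite_S: "finite S" and fin_in_S: "fin \<in> S"
  using tpmc unfolding tpmc_def by auto

lemma depth_pos: "0 < depth"
  unfolding depth_def using finite_S fin_in_S card_gt_0_iff by blast

lemma card_succ_bounds:
  assumes "s \<in> S - {fin, fail}"
  shows "2 \<le> card (succ E s)" "card (succ E s) \<le> depth"
  using assms branching card_mono[OF finite_S tpmc_succ_subset[OF tpmc]]
  unfolding depth_def by auto

lemma bij_betw_enum_succ: "bij_betw (enum_succ s) {0..<card (succ E s)} (succ E s)"
  unfolding enum_succ_def
  using ex_bij_betw_nat_finite[OF tpmc_finite_succ[OF tpmc]] by (rule someI_ex)

lemma leaf_label_in_succ: "s \<in> S - {fin, fail} \<Longrightarrow> leaf_label s q \<in> succ E s"
  using bij_betw_enum_succ card_succ_bounds(1)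
  unfolding leaf_label_def bij_betw_def by fastforce

lemma image_leaf_label:
  assumes s: "s \<in> S - {fin, fail}"
  shows "leaf_label s ` {..<2 ^ depth} = succ E s"
proof
  show "leaf_label s ` {..<2 ^ depth} \<subseteq> succ E s"
    using leaf_label_in_succ[OF s] by blast
  show "succ E s \<subseteq> leaf_label s ` {..<2 ^ depth}"
  proof
    fix t assume "t \<in> succ E s"
    then obtain i where i: "i < card (succ E s)" "t = enum_succ s i"
      using bij_betw_enum_succ[of s] unfolding bij_betw_def by (metis atLeastLessThan_iff imageE)
    have "i < 2 ^ depth"
      using i(1) card_succ_bounds(2)[OF s] less_exp[of depth] by linarith
    moreover have "leaf_label s i = t"
      using i unfolding leaf_label_def by simp
    ultimately show "t \<in> leaf_label s ` {..<2 ^ depth}" by blast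
  qed
qed

lemma leaf_label_siblings_neq:
  assumes s: "s \<in> S - {fin, fail}"
  shows "leaf_label s (2 * p) \<noteq> leaf_label s (2 * p + 1)"
proof
  let ?k = "card (succ E s)"
  assume "leaf_label s (2 * p) = leaf_label s (2 * p + 1)"
  moreover have "inj_on (enum_succ s) {0..<?k}"
    using bij_betw_enum_succ[of s] by (simp add: bij_betw_def)
  ultimately have "(2 * p) mod ?k = (2 * p + 1) mod ?k"
    using card_succ_bounds(1)[OF s] unfolding leaf_label_def inj_on_def by simp
  then show False
    using card_succ_bounds(1)[OF s] by (simp add: mod_Suc split: if_splits)
qed

lemma inj_on_node: "inj_on (\<lambda>(s, d, p). node s d p) inner_nodes"
proof -
  have "inj_on (to_nat_on S) S"
    using finite_S by (simp add: countable_finite inj_on_to_nat_on)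
  then show ?thesis
    by (auto simp: inj_on_def node_def inner_nodes_def split: if_splits)
qed

lemma node_siblings_neq:
  assumes "(s, d, p) \<in> inner_nodes"
  shows "node s (Suc d) (2 * p) \<noteq> node s (Suc d) (2 * p + 1)"
  using assms leaf_label_siblings_neq
  by (auto simp: node_def inner_nodes_def)

lemma node_mem_bin_states:
  assumes "(s, d, p) \<in> inner_nodes"
  shows "node s d p \<in> bin_states - {Inl fin, Inl fail}"
proof -
  have "node s d p \<in> bin_states"
    using assms unfolding bin_states_def by force
  moreover have "node s d p \<noteq> Inl fin" "node s d p \<noteq> Inl fail"
    using assms by (auto simp: node_def inner_nodes_def)
  ultimately show ?thesis by blast
qed

lemma child_mem_bin_states:
  assumes "(s, d, p) \<in> inner_nodes" "q < 2 ^ Suc d"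
  shows "node s (Suc d) q \<in> bin_states"
proof (cases "Suc d < depth")
  case True
  then have "(s, Suc d, q) \<in> inner_nodes"
    using assms unfolding inner_nodes_def by auto
  then show ?thesis
    using node_mem_bin_states by blast
next
  case False
  have "leaf_label s q \<in> S"
    using assms(1) leaf_label_in_succ tpmc_succ_subset[OF tpmc]
    unfolding inner_nodes_def by blast
  then show ?thesis
    using False unfolding bin_states_def node_def by simp
qed

lemma succ_node:
  assumes "(s, d, p) \<in> inner_nodes"
  shows "succ bin_edges (node s d p) = {node s (Suc d) (2 * p), node s (Suc d) (2 * p + 1)}"
proof -
  have "y \<in> {node s (Suc d) (2 * p), node s (Suc d) (2 * p + 1)}"
    if y: "y \<in> succ bin_edges (node s d p)" for y
  proof -
    obtain s' d' p' q where "(s', d', p') \<in> inner_nodes" "node s d p = node s' d' p'"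
      "q = 2 * p' \<or> q = 2 * p' + 1" "y = node s' (Suc d') q"
      using y unfolding succ_def bin_edges_def by blast
    with inj_onD[OF inj_on_node _ assms] show ?thesis by auto
  qed
  moreover have "{node s (Suc d) (2 * p), node s (Suc d) (2 * p + 1)} \<subseteq> succ bin_edges (node s d p)"
    using assms unfolding succ_def bin_edges_def by blast
  ultimately show ?thesis by blast
qed

lemma bin_states_nontarget_cases:
  assumes "x \<in> bin_states - {Inl fin, Inl fail}"
  obtains s d p where "(s, d, p) \<in> inner_nodes" "x = node s d p"
proof (cases "x \<in> Inl ` S")
  case True
  then obtain s where "s \<in> S" "x = Inl s" by blast
  then have "(s, 0, 0) \<in> inner_nodes" "x = node s 0 0"
    using assms depth_pos unfolding inner_nodes_def node_def by auto
  then show ?thesis using that by blast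
next
  case False
  then show ?thesis
    using assms that unfolding bin_states_def by auto
qed

lemma card_succ_bin_states:
  assumes "x \<in> bin_states - {Inl fin, Inl fail}"
  shows "card (succ bin_edges x) = 2"
proof -
  obtain s d p where "(s, d, p) \<in> inner_nodes" "x = node s d p"
    using assms by (rule bin_states_nontarget_cases)
  then show ?thesis
    using succ_node node_siblings_neq by simp
qed

lemma tpmc_binarized: "tpmc bin_states bin_edges (Inl fin) (Inl fail)"
proof -
  have "inner_nodes \<subseteq> S \<times> {..<depth} \<times> {..<2 ^ depth}"
    unfolding inner_nodes_def
    by (auto intro: less_le_trans[OF _ power_increasing[of _ depth "2::nat"]])
  then have "finite inner_nodes"
    by (rule finite_subset) (simp add: finite_S)
  then have "finite bin_states"
    unfolding bin_states_def using finite_S by simp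
  moreover have "bin_edges \<subseteq> (bin_states - {Inl fin, Inl fail}) \<times> bin_states"
  proof
    fix e assume "e \<in> bin_edges"
    then obtain s d p q where "(s, d, p) \<in> inner_nodes" "q = 2 * p \<or> q = 2 * p + 1"
      "e = (node s d p, node s (Suc d) q)"
      unfolding bin_edges_def by blast
    moreover from this have "q < 2 ^ Suc d"
      unfolding inner_nodes_def by auto
    ultimately show "e \<in> (bin_states - {Inl fin, Inl fail}) \<times> bin_states"
      using node_mem_bin_states child_mem_bin_states by blast
  qed
  ultimately show ?thesis
    using tpmc unfolding tpmc_def bin_states_def by auto
qed

lemma sum_leaves_by_label:
  assumes "s \<in> S - {fin, fail}"
  shows "(\<Sum>q<2 ^ depth. f q) = (\<Sum>t\<in>succ E s. \<Sum>q | q < 2 ^ depth \<and> leaf_label s q = t. f q)"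
  using sum.image_gen[of "{..<2 ^ depth}" f "leaf_label s"]
  unfolding image_leaf_label[OF assms] by simp

abbreviation bin_reach_bounded :: "('a + nat \<Rightarrow> 'a + nat \<Rightarrow> real) \<Rightarrow> nat \<Rightarrow> 'a + nat \<Rightarrow> real" where
  "bin_reach_bounded w \<equiv> reach_bounded bin_edges (Inl fin) (Inl fail) w"

lemma bin_reach_bounded_node_Suc:
  assumes "(s, d, p) \<in> inner_nodes"
  shows "bin_reach_bounded w (Suc n) (node s d p) =
    w (node s d p) (node s (Suc d) (2 * p)) * bin_reach_bounded w n (node s (Suc d) (2 * p)) +
    w (node s d p) (node s (Suc d) (2 * p + 1)) * bin_reach_bounded w n (node s (Suc d) (2 * p + 1))"
  using node_mem_bin_states[OF assms] succ_node[OF assms] node_siblings_neq[OF assms] by simp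

primrec path_weight :: "('a + nat \<Rightarrow> 'a + nat \<Rightarrow> real) \<Rightarrow> 'a \<Rightarrow> nat \<Rightarrow> nat \<Rightarrow> real" where
  "path_weight w s 0 q = 1"
| "path_weight w s (Suc d) q = path_weight w s d (q div 2) * w (node s d (q div 2)) (node s (Suc d) q)"

lemma bin_reach_bounded_root:
  assumes s: "s \<in> S - {fin, fail}" and "d \<le> depth"
  shows "bin_reach_bounded w (m + depth) (Inl s) =
    (\<Sum>q<2 ^ d. path_weight w s d q * bin_reach_bounded w (m + (depth - d)) (node s d q))"
  using \<open>d \<le> depth\<close>
proof (induction d)
  case 0
  then show ?case by (simp add: node_def)
next
  case (Suc d)
  let ?n = "m + (depth - Suc d)"
  have n: "m + (depth - d) = Suc ?n"
    using Suc.prems by simp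
  have "path_weight w s d p * bin_reach_bounded w (m + (depth - d)) (node s d p) =
      path_weight w s (Suc d) (2 * p) * bin_reach_bounded w ?n (node s (Suc d) (2 * p)) +
      path_weight w s (Suc d) (2 * p + 1) * bin_reach_bounded w ?n (node s (Suc d) (2 * p + 1))"
    if "p < 2 ^ d" for p
  proof -
    have "(s, d, p) \<in> inner_nodes"
      using s Suc.prems that unfolding inner_nodes_def by simp
    then show ?thesis
      unfolding n bin_reach_bounded_node_Suc[OF \<open>(s, d, p) \<in> inner_nodes\<close>]
      by (simp add: algebra_simps)
  qed
  then show ?case
    using Suc by (simp add: sum_lessThan_double)
qed

definition leaf_mass :: "('a + nat \<Rightarrow> 'a + nat \<Rightarrow> real) \<Rightarrow> 'a \<Rightarrow> 'a \<Rightarrow> real" where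
  "leaf_mass w s t = (\<Sum>q | q < 2 ^ depth \<and> leaf_label s q = t. path_weight w s depth q)"

lemma bin_reach_bounded_step:
  assumes "s \<in> S - {fin, fail}"
  shows "bin_reach_bounded w (m + depth) (Inl s) =
    (\<Sum>t\<in>succ E s. leaf_mass w s t * bin_reach_bounded w m (Inl t))"
proof -
  have "bin_reach_bounded w (m + depth) (Inl s) =
      (\<Sum>q<2 ^ depth. path_weight w s depth q * bin_reach_bounded w m (Inl (leaf_label s q)))"
    using bin_reach_bounded_root[OF assms order_refl] depth_pos by (simp add: node_def)
  also have "\<dots> = (\<Sum>t\<in>succ E s. leaf_mass w s t * bin_reach_bounded w m (Inl t))"
    unfolding sum_leaves_by_label[OF assms] leaf_mass_def sum_distrib_right
    by (intro sum.cong) auto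
  finally show ?thesis .
qed

lemma reach_prob_binarized:
  assumes w: "gp_val bin_states bin_edges (Inl fin) (Inl fail) w"
    and v: "\<And>s t. s \<in> S - {fin, fail} \<Longrightarrow> t \<in> succ E s \<Longrightarrow> v s t = leaf_mass w s t"
    and "s \<in> S"
  shows "reach_prob E fin fail v s = reach_prob bin_edges (Inl fin) (Inl fail) w (Inl s)"
proof (rule reach_prob_eq_if_step_simulation[OF tpmc tpmc_binarized w depth_pos _ \<open>s \<in> S\<close>])
  fix s m assume "s \<in> S - {fin, fail}"
  then show "bin_reach_bounded w (m + depth) (Inl s) =
      (\<Sum>t\<in>succ E s. v s t * bin_reach_bounded w m (Inl t))"
    using v by (simp add: bin_reach_bounded_step)
qed

context
  fixes w :: "'a + nat \<Rightarrow> 'a + nat \<Rightarrow> real"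
  assumes w: "gp_val bin_states bin_edges (Inl fin) (Inl fail) w"
begin

lemma edge_weight_pos:
  assumes "(s, d, p) \<in> inner_nodes" "q = 2 * p \<or> q = 2 * p + 1"
  shows "0 < w (node s d p) (node s (Suc d) q)"
  using gp_val_pos[OF w node_mem_bin_states[OF assms(1)]] succ_node[OF assms(1)] assms(2) by auto

lemma edge_weight_sum:
  assumes "(s, d, p) \<in> inner_nodes"
  shows "w (node s d p) (node s (Suc d) (2 * p)) + w (node s d p) (node s (Suc d) (2 * p + 1)) = 1"
  using gp_val_sum[OF w node_mem_bin_states[OF assms]] succ_node[OF assms] node_siblings_neq[OF assms]
  by simp

lemma path_weight_pos:
  assumes s: "s \<in> S - {fin, fail}"
  shows "d \<le> depth \<Longrightarrow> q < 2 ^ d \<Longrightarrow> 0 < path_weight w s d q"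
proof (induction d arbitrary: q)
  case (Suc d)
  then have "(s, d, q div 2) \<in> inner_nodes"
    using s unfolding inner_nodes_def by auto
  moreover have "q = 2 * (q div 2) \<or> q = 2 * (q div 2) + 1"
    by auto
  ultimately show ?case
    using edge_weight_pos Suc by auto
qed simp

lemma sum_path_weight:
  assumes s: "s \<in> S - {fin, fail}"
  shows "d \<le> depth \<Longrightarrow> (\<Sum>q<2 ^ d. path_weight w s d q) = 1"
proof (induction d)
  case (Suc d)
  have "path_weight w s (Suc d) (2 * p) + path_weight w s (Suc d) (2 * p + 1) = path_weight w s d p"
    if "p < 2 ^ d" for p
  proof -
    have "(s, d, p) \<in> inner_nodes"
      using s Suc.prems that unfolding inner_nodes_def by simp
    then show ?thesis
      using edge_weight_sum by (simp flip: distrib_left)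
  qed
  then show ?case
    using Suc by (simp add: sum_lessThan_double)
qed simp

lemma leaf_mass_pos:
  assumes s: "s \<in> S - {fin, fail}" and "t \<in> succ E s"
  shows "0 < leaf_mass w s t"
proof -
  obtain q where "q < 2 ^ depth" "leaf_label s q = t"
    using \<open>t \<in> succ E s\<close> image_leaf_label[OF s] by (metis imageE lessThan_iff)
  then show ?thesis
    unfolding leaf_mass_def
    by (intro sum_pos2[where i = q]) (auto intro: less_imp_le path_weight_pos[OF s])
qed

lemma sum_leaf_mass: "s \<in> S - {fin, fail} \<Longrightarrow> (\<Sum>t\<in>succ E s. leaf_mass w s t) = 1"
  using sum_path_weight[of s depth] sum_leaves_by_label[of s "path_weight w s depth"]
  unfolding leaf_mass_def by simp

end

definition project_val :: "('a + nat \<Rightarrow> 'a + nat \<Rightarrow> real) \<Rightarrow> 'a \<Rightarrow> 'a \<Rightarrow> real" where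
  "project_val w s t = (if (s, t) \<in> E then leaf_mass w s t else 0)"

lemma gp_val_project_val:
  assumes "gp_val bin_states bin_edges (Inl fin) (Inl fail) w"
  shows "gp_val S E fin fail (project_val w)"
  unfolding gp_val_def
proof (intro ballI conjI allI impI)
  fix s assume s: "s \<in> S - {fin, fail}"
  show "0 < project_val w s t" if "(s, t) \<in> E" for t
    using leaf_mass_pos[OF assms s] that unfolding project_val_def succ_def by simp
  show "project_val w s t = 0" if "(s, t) \<notin> E" for t
    using that unfolding project_val_def by simp
  have "(\<Sum>t\<in>succ E s. project_val w s t) = (\<Sum>t\<in>succ E s. leaf_mass w s t)"
    unfolding project_val_def succ_def by simp
  then show "(\<Sum>t\<in>succ E s. project_val w s t) = 1"
    using sum_leaf_mass[OF assms s] by simp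
qed

definition leaf_weight :: "('a \<Rightarrow> 'a \<Rightarrow> real) \<Rightarrow> 'a \<Rightarrow> nat \<Rightarrow> real" where
  "leaf_weight v s q =
    v s (leaf_label s q) / card {r. r < 2 ^ depth \<and> leaf_label s r = leaf_label s q}"

definition subtree_mass :: "('a \<Rightarrow> 'a \<Rightarrow> real) \<Rightarrow> 'a \<Rightarrow> nat \<Rightarrow> nat \<Rightarrow> real" where
  "subtree_mass v s d p = (\<Sum>r = p * 2 ^ (depth - d)..<Suc p * 2 ^ (depth - d). leaf_weight v s r)"

definition node_index :: "'a + nat \<Rightarrow> 'a \<times> nat \<times> nat" where
  "node_index = the_inv_into inner_nodes (\<lambda>(s, d, p). node s d p)"

definition lift_val :: "('a \<Rightarrow> 'a \<Rightarrow> real) \<Rightarrow> 'a + nat \<Rightarrow> 'a + nat \<Rightarrow> real" where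
  "lift_val v x y =
    (if (x, y) \<in> bin_edges then
       (case node_index x of (s, d, p) \<Rightarrow>
          subtree_mass v s (Suc d) (if y = node s (Suc d) (2 * p) then 2 * p else 2 * p + 1)
            / subtree_mass v s d p)
     else 0)"

lemma card_leaves_labelled_pos:
  assumes s: "s \<in> S - {fin, fail}" and "t \<in> succ E s"
  shows "0 < card {q. q < 2 ^ depth \<and> leaf_label s q = t}"
proof -
  obtain q where "q < 2 ^ depth" "leaf_label s q = t"
    using \<open>t \<in> succ E s\<close> image_leaf_label[OF s] by (metis imageE lessThan_iff)
  then show ?thesis
    by (auto simp: card_gt_0_iff)
qed

lemma sum_leaf_weight_labelled:
  assumes "s \<in> S - {fin, fail}" "t \<in> succ E s"
  shows "(\<Sum>q | q < 2 ^ depth \<and> leaf_label s q = t. leaf_weight v s q) = v s t"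
proof -
  let ?L = "{q. q < 2 ^ depth \<and> leaf_label s q = t}"
  have "(\<Sum>q\<in>?L. leaf_weight v s q) = (\<Sum>q\<in>?L. v s t / card ?L)"
    unfolding leaf_weight_def by (rule sum.cong) auto
  also have "\<dots> = v s t"
  proof -
    obtain n where "card ?L = n" "0 < n"
      using card_leaves_labelled_pos[OF assms] by blast
    then show ?thesis by simp
  qed
  finally show ?thesis .
qed

lemma leaf_weight_pos:
  assumes "gp_val S E fin fail v" "s \<in> S - {fin, fail}"
  shows "0 < leaf_weight v s q"
  using gp_val_pos[OF assms leaf_label_in_succ[OF assms(2)]]
    card_leaves_labelled_pos[OF assms(2) leaf_label_in_succ[OF assms(2)]]
  unfolding leaf_weight_def by simp

lemma subtree_mass_pos:
  assumes "gp_val S E fin fail v" "s \<in> S - {fin, fail}"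
  shows "0 < subtree_mass v s d p"
  unfolding subtree_mass_def by (intro sum_pos leaf_weight_pos[OF assms]) simp_all

lemma subtree_mass_root:
  assumes "gp_val S E fin fail v" "s \<in> S - {fin, fail}"
  shows "subtree_mass v s 0 0 = 1"
proof -
  have "subtree_mass v s 0 0 = (\<Sum>q<2 ^ depth. leaf_weight v s q)"
    unfolding subtree_mass_def by (simp add: atLeast0LessThan)
  also have "\<dots> = (\<Sum>t\<in>succ E s. v s t)"
    unfolding sum_leaves_by_label[OF assms(2)]
    using sum_leaf_weight_labelled[OF assms(2)] by simp
  finally show ?thesis
    using gp_val_sum[OF assms] by simp
qed

lemma subtree_mass_leaf: "subtree_mass v s depth q = leaf_weight v s q"
  unfolding subtree_mass_def by simp

lemma subtree_mass_split:
  assumes "d < depth"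
  shows "subtree_mass v s d p = subtree_mass v s (Suc d) (2 * p) + subtree_mass v s (Suc d) (2 * p + 1)"
proof -
  define m :: nat where "m = 2 ^ (depth - Suc d)"
  have "2 ^ (depth - d) = 2 * m"
    unfolding m_def using assms by (metis Suc_diff_Suc power_Suc)
  then have "subtree_mass v s d p = (\<Sum>r = (2 * p) * m..<Suc (2 * p + 1) * m. leaf_weight v s r)"
    unfolding subtree_mass_def by (simp add: algebra_simps)
  also have "\<dots> = (\<Sum>r = (2 * p) * m..<(2 * p + 1) * m. leaf_weight v s r)
      + (\<Sum>r = (2 * p + 1) * m..<Suc (2 * p + 1) * m. leaf_weight v s r)"
    by (rule sum.atLeastLessThan_concat[symmetric]) simp_all
  finally show ?thesis
    unfolding subtree_mass_def m_def by simp
qed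

lemma lift_val_edge:
  assumes "(s, d, p) \<in> inner_nodes" "q = 2 * p \<or> q = 2 * p + 1"
  shows "lift_val v (node s d p) (node s (Suc d) q) = subtree_mass v s (Suc d) q / subtree_mass v s d p"
proof -
  have "(node s d p, node s (Suc d) q) \<in> bin_edges"
    using assms unfolding bin_edges_def by blast
  moreover have "node_index (node s d p) = (s, d, p)"
    unfolding node_index_def using the_inv_into_f_f[OF inj_on_node assms(1)] by simp
  ultimately show ?thesis
    using assms(2) node_siblings_neq[OF assms(1)] unfolding lift_val_def by auto
qed

context
  fixes v :: "'a \<Rightarrow> 'a \<Rightarrow> real"
  assumes v: "gp_val S E fin fail v"
begin

lemma gp_val_lift_val: "gp_val bin_states bin_edges (Inl fin) (Inl fail) (lift_val v)"
  unfolding gp_val_def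
proof (intro ballI conjI allI impI)
  fix x assume "x \<in> bin_states - {Inl fin, Inl fail}"
  then obtain s d p where sdp: "(s, d, p) \<in> inner_nodes" and x: "x = node s d p"
    by (rule bin_states_nontarget_cases)
  then have s: "s \<in> S - {fin, fail}" and "d < depth"
    unfolding inner_nodes_def by auto
  have child_weight: "lift_val v x (node s (Suc d) q) = subtree_mass v s (Suc d) q / subtree_mass v s d p"
    if "q = 2 * p \<or> q = 2 * p + 1" for q
    unfolding x using lift_val_edge[OF sdp that] .
  show "0 < lift_val v x y" if "(x, y) \<in> bin_edges" for y
  proof -
    from that obtain q where "q = 2 * p \<or> q = 2 * p + 1" "y = node s (Suc d) q"
      using succ_node[OF sdp] unfolding x succ_def by blast
    then show ?thesis
      using child_weight subtree_mass_pos[OF v s] by simp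
  qed
  show "lift_val v x y = 0" if "(x, y) \<notin> bin_edges" for y
    using that unfolding lift_val_def by simp
  show "(\<Sum>y\<in>succ bin_edges x. lift_val v x y) = 1"
    using succ_node[OF sdp] node_siblings_neq[OF sdp] child_weight
      subtree_mass_split[OF \<open>d < depth\<close>, of v s p] subtree_mass_pos[OF v s, of d p]
    unfolding x by (simp add: add_divide_distrib[symmetric])
qed

lemma path_weight_lift_val:
  assumes s: "s \<in> S - {fin, fail}"
  shows "d \<le> depth \<Longrightarrow> q < 2 ^ d \<Longrightarrow> path_weight (lift_val v) s d q = subtree_mass v s d q"
proof (induction d arbitrary: q)
  case 0
  then show ?case
    using subtree_mass_root[OF v s] by simp
next
  case (Suc d)
  then have "(s, d, q div 2) \<in> inner_nodes"
    using s unfolding inner_nodes_def by auto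
  moreover have "q = 2 * (q div 2) \<or> q = 2 * (q div 2) + 1"
    by auto
  ultimately show ?case
    using Suc lift_val_edge subtree_mass_pos[OF v s, of d "q div 2"] by auto
qed

lemma leaf_mass_lift_val:
  assumes "s \<in> S - {fin, fail}" "t \<in> succ E s"
  shows "leaf_mass (lift_val v) s t = v s t"
  using path_weight_lift_val[OF assms(1) order_refl] sum_leaf_weight_labelled[OF assms]
  unfolding leaf_mass_def subtree_mass_leaf by simp

end

end

theorem lemma13:
  fixes S :: "'a set" and E :: "('a \<times> 'a) set" and fin fail :: 'a
  assumes "tpmc S E fin fail"
    and "\<forall>s \<in> S - {fin, fail}. card (succ E s) \<ge> 2"
  shows "\<exists>(S' :: ('a + nat) set) E'.
     tpmc S' E' (Inl fin) (Inl fail) \<and> Inl ` S \<subseteq> S' \<and>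
     (\<forall>s \<in> S' - {Inl fin, Inl fail}. card (succ E' s) = 2) \<and>
     (\<forall>val. gp_val S E fin fail val \<longrightarrow>
        (\<exists>val'. gp_val S' E' (Inl fin) (Inl fail) val' \<and>
           (\<forall>s \<in> S. reach_prob E fin fail val s = reach_prob E' (Inl fin) (Inl fail) val' (Inl s)))) \<and>
     (\<forall>val'. gp_val S' E' (Inl fin) (Inl fail) val' \<longrightarrow>
        (\<exists>val. gp_val S E fin fail val \<and>
           (\<forall>s \<in> S. reach_prob E fin fail val s = reach_prob E' (Inl fin) (Inl fail) val' (Inl s))))"
proof -
  interpret binarization S E fin fail
    using assms by unfold_locales
  have "\<forall>x \<in> bin_states - {Inl fin, Inl fail}. card (succ bin_edges x) = 2"
    using card_succ_bin_states by blast
  moreover have "\<exists>w. gp_val bin_states bin_edges (Inl fin) (Inl fail) w \<and>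
      (\<forall>s \<in> S. reach_prob E fin fail v s = reach_prob bin_edges (Inl fin) (Inl fail) w (Inl s))"
    if "gp_val S E fin fail v" for v
    using that gp_val_lift_val reach_prob_binarized leaf_mass_lift_val by metis
  moreover have "\<exists>v. gp_val S E fin fail v \<and>
      (\<forall>s \<in> S. reach_prob E fin fail v s = reach_prob bin_edges (Inl fin) (Inl fail) w (Inl s))"
    if "gp_val bin_states bin_edges (Inl fin) (Inl fail) w" for w
    using that gp_val_project_val reach_prob_binarized[of w "project_val w"]
    unfolding project_val_def succ_def by auto
  moreover have "Inl ` S \<subseteq> bin_states"
    unfolding bin_states_def by blast
  ultimately show ?thesis
    using tpmc_binarized by blast
qed

end
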